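(* Let $\mathcal{H}$ be a projection-closed class of graphs. Then one of the following holds: (i) $\mathcal{H}$ contains $K_t$ for every $t\ge 1$; (ii) $\mathcal{H}$ contains $K_{t,t,t}$ for every $t\ge 1$; (iii) there is a $\mu\ge 0$ such that every $H\in\mathcal{H}$ has distance at most $\mu$ to extended bicliques.
   Context: A graph $H'$ is a projection of $H$ if $H'$ can be obtained from $H$ by a sequence of vertex deletions and identifications of two nonadjacent vertices; a class of graphs (closed under isomorphism) is projection-closed if it contains every projection of each of its members. $K_{t,t,t}$ is the complete tripartite graph with three parts of size $t$. An extended biclique is a complete bipartite graph together with a set of isolated vertices; the distance of $H$ to extended bicliques is the minimum number of vertices to delete from $H$ to obtain an extended biclique. *)

theory Defs
  imports Main
begin

(* Finite simple graphs on natural-number vertices: (V, E) with E a set of 2-element subsets of V *)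
type_synonym graph = "nat set \<times> nat set set"

definition verts :: "graph \<Rightarrow> nat set" where "verts G = fst G"
definition edges :: "graph \<Rightarrow> nat set set" where "edges G = snd G"

definition is_graph :: "graph \<Rightarrow> bool" where
  "is_graph G \<longleftrightarrow> finite (verts G) \<and>
     (\<forall>e\<in>edges G. \<exists>u v. e = {u, v} \<and> u \<noteq> v \<and> u \<in> verts G \<and> v \<in> verts G)"

definition graph_iso :: "graph \<Rightarrow> graph \<Rightarrow> bool" where
  "graph_iso G H \<longleftrightarrow> (\<exists>f. bij_betw f (verts G) (verts H) \<and>
     (\<forall>u\<in>verts G. \<forall>v\<in>verts G. {u, v} \<in> edges G \<longleftrightarrow> {f u, f v} \<in> edges H))"

definition delete_vertex :: "graph \<Rightarrow> nat \<Rightarrow> graph" where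
  "delete_vertex G x = (verts G - {x}, {e \<in> edges G. x \<notin> e})"

definition identify :: "graph \<Rightarrow> nat \<Rightarrow> nat \<Rightarrow> graph" where
  "identify G u v = (verts G - {u},
      {e \<in> edges G. u \<notin> e} \<union> {{v, w} | w. {u, w} \<in> edges G})"

inductive projection_step :: "graph \<Rightarrow> graph \<Rightarrow> bool" where
  del: "x \<in> verts G \<Longrightarrow> projection_step G (delete_vertex G x)"
| ident: "u \<in> verts G \<Longrightarrow> v \<in> verts G \<Longrightarrow> u \<noteq> v \<Longrightarrow> {u, v} \<notin> edges G
          \<Longrightarrow> projection_step G (identify G u v)"

definition is_projection :: "graph \<Rightarrow> graph \<Rightarrow> bool" where
  "is_projection H' H \<longleftrightarrow> projection_step\<^sup>*\<^sup>* H H'"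

definition graph_class :: "graph set \<Rightarrow> bool" where
  "graph_class \<H> \<longleftrightarrow> (\<forall>G\<in>\<H>. is_graph G) \<and>
     (\<forall>G\<in>\<H>. \<forall>H. is_graph H \<and> graph_iso G H \<longrightarrow> H \<in> \<H>)"

definition projection_closed :: "graph set \<Rightarrow> bool" where
  "projection_closed \<H> \<longleftrightarrow> (\<forall>H\<in>\<H>. \<forall>H'. is_projection H' H \<longrightarrow> H' \<in> \<H>)"

definition complete_graph :: "nat \<Rightarrow> graph" where
  "complete_graph t = ({0..<t}, {{u, v} | u v. u < t \<and> v < t \<and> u \<noteq> v})"

(* K_{t,t,t}: parts {0..<t}, {t..<2t}, {2t..<3t} *)
definition complete_tripartite :: "nat \<Rightarrow> graph" where
  "complete_tripartite t = ({0..<3*t},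
      {{u, v} | u v. u < 3*t \<and> v < 3*t \<and> u div t \<noteq> v div t})"

definition contains :: "graph set \<Rightarrow> graph \<Rightarrow> bool" where
  "contains \<H> H \<longleftrightarrow> (\<exists>G\<in>\<H>. graph_iso G H)"

definition induced_delete :: "graph \<Rightarrow> nat set \<Rightarrow> graph" where
  "induced_delete G X = (verts G - X, {e \<in> edges G. e \<inter> X = {}})"

(* complete bipartite graph (parts A, B) plus isolated vertices *)
definition extended_biclique :: "graph \<Rightarrow> bool" where
  "extended_biclique G \<longleftrightarrow> (\<exists>A B. A \<inter> B = {} \<and> A \<union> B \<subseteq> verts G \<and>
      edges G = {{a, b} | a b. a \<in> A \<and> b \<in> B})"

definition dist_ext_biclique_le :: "graph \<Rightarrow> nat \<Rightarrow> bool" where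
  "dist_ext_biclique_le G \<mu> \<longleftrightarrow>
     (\<exists>X \<subseteq> verts G. card X \<le> \<mu> \<and> extended_biclique (induced_delete G X))"

end

theory Submission
  imports Defs "HOL-Library.Ramsey"
begin

(* A graph without an induced triangle, P4 or 2K2 is an extended biclique, so a graph far from
   extended bicliques contains many vertex-disjoint copies of these obstructions. By Ramsey's
   theorem, n of them have the same type and every two of them are joined by the same pattern P.
   A case analysis on P yields either K_t or, when P just repeats the obstruction itself,
   K_{s,s,s} as a family of disjoint independent sets with the right adjacencies between them;
   identifying each of these sets to a single vertex is a projection. *)

section \<open>Deletions and identifications\<close>

lemma verts_pair [simp]: "verts (V, E) = V" and edges_pair [simp]: "edges (V, E) = E"
  by (simp_all add: verts_def edges_def)

abbreviation adj :: "graph \<Rightarrow> nat \<Rightarrow> nat \<Rightarrow> bool" where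
  "adj G x y \<equiv> {x, y} \<in> edges G"

lemma adj_commute: "adj G x y \<longleftrightarrow> adj G y x"
  by (simp add: insert_commute)

lemma is_graph_adjD:
  assumes "is_graph G" "adj G x y"
  shows "x \<in> verts G" "y \<in> verts G" "x \<noteq> y"
  using assms unfolding is_graph_def by (metis doubleton_eq_iff)+

lemma is_graph_edgeE:
  assumes "is_graph G" "e \<in> edges G"
  obtains x y where "e = {x, y}"
  using assms unfolding is_graph_def by blast

lemma adj_induced_delete: "adj (induced_delete G X) x y \<longleftrightarrow> adj G x y \<and> x \<notin> X \<and> y \<notin> X"
  by (auto simp: induced_delete_def)

lemma verts_induced_delete [simp]: "verts (induced_delete G X) = verts G - X"
  by (simp add: induced_delete_def)

lemma verts_identify [simp]: "verts (identify G u v) = verts G - {u}"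
  by (simp add: identify_def)

lemma adj_identify:
  assumes "x \<noteq> u" "y \<noteq> u"
  shows "adj (identify G u v) x y \<longleftrightarrow> adj G x y \<or> (x = v \<and> adj G u y) \<or> (y = v \<and> adj G u x)"
  using assms by (auto simp: identify_def doubleton_eq_iff insert_commute)

lemma is_graph_induced_delete:
  assumes "is_graph G"
  shows "is_graph (induced_delete G X)"
  unfolding is_graph_def
proof (intro conjI ballI)
  show "finite (verts (induced_delete G X))"
    using assms by (simp add: is_graph_def)
next
  fix e assume "e \<in> edges (induced_delete G X)"
  then have e: "e \<in> edges G" "e \<inter> X = {}"
    by (auto simp: induced_delete_def)
  then obtain x y where "e = {x, y}"
    using assms by (blast elim: is_graph_edgeE)
  with e assms show "\<exists>x y. e = {x, y} \<and> x \<noteq> y \<and> x \<in> verts (induced_delete G X) \<and> y \<in> verts (induced_delete G X)"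
    using is_graph_adjD[of G x y] by auto
qed

lemma is_graph_identify:
  assumes G: "is_graph G" and "v \<in> verts G" "u \<noteq> v" "\<not> adj G u v"
  shows "is_graph (identify G u v)"
  unfolding is_graph_def
proof (intro conjI ballI)
  show "finite (verts (identify G u v))"
    using G by (simp add: is_graph_def)
next
  fix e assume "e \<in> edges (identify G u v)"
  then consider "e \<in> edges G" "u \<notin> e" | w where "e = {v, w}" "adj G u w"
    by (auto simp: identify_def)
  then show "\<exists>x y. e = {x, y} \<and> x \<noteq> y \<and> x \<in> verts (identify G u v) \<and> y \<in> verts (identify G u v)"
  proof cases
    case 1
    then obtain x y where "e = {x, y}"
      using G by (blast elim: is_graph_edgeE)
    with 1 G show ?thesis
      using is_graph_adjD[of G x y] by auto
  next
    case 2
    with assms show ?thesis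
      using is_graph_adjD[of G u w] by auto
  qed
qed

lemma projection_induced_delete:
  assumes "finite X" "X \<subseteq> verts G"
  shows "projection_step\<^sup>*\<^sup>* G (induced_delete G X)"
  using assms
proof (induction X rule: finite_induct)
  case empty
  have "induced_delete G {} = G"
    by (simp add: induced_delete_def verts_def edges_def)
  then show ?case by simp
next
  case (insert x X)
  have "induced_delete G (insert x X) = delete_vertex (induced_delete G X) x"
    by (auto simp: induced_delete_def delete_vertex_def)
  moreover have "x \<in> verts (induced_delete G X)"
    using insert by simp
  ultimately show ?case
    using insert projection_step.del by (metis insert_subset rtranclp.rtrancl_into_rtrancl)
qed

section \<open>Projections onto models by independent sets\<close>

text \<open>Identifying each set \<open>C c\<close> to a single vertex, after deleting all other vertices,
  yields the graph on \<open>{0..<m}\<close> with adjacency \<open>R\<close>.\<close>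

definition indep_model ::
    "('a \<Rightarrow> 'a \<Rightarrow> bool) \<Rightarrow> 'a set \<Rightarrow> nat \<Rightarrow> (nat \<Rightarrow> 'a set) \<Rightarrow> (nat \<Rightarrow> nat \<Rightarrow> bool) \<Rightarrow> bool" where
  "indep_model A D m C R \<longleftrightarrow>
     (\<forall>c<m. C c \<noteq> {} \<and> C c \<subseteq> D \<and> (\<forall>x\<in>C c. \<forall>y\<in>C c. x \<noteq> y \<longrightarrow> \<not> A x y)) \<and>
     (\<forall>c<m. \<forall>d<m. c \<noteq> d \<longrightarrow> C c \<inter> C d = {}) \<and>
     (\<forall>c<m. \<forall>d<m. c \<noteq> d \<longrightarrow> (\<exists>x\<in>C c. \<exists>y\<in>C d. A x y) = R c d)"

lemma indep_model_image:
  assumes model: "indep_model A D m C R"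
    and v: "inj_on v D" "v ` D \<subseteq> D'"
    and A: "\<forall>x\<in>D. \<forall>y\<in>D. x \<noteq> y \<longrightarrow> (A' (v x) (v y) \<longleftrightarrow> A x y)"
  shows "indep_model A' D' m (\<lambda>c. v ` C c) R"
  unfolding indep_model_def
proof (intro conjI allI impI ballI)
  fix c assume c: "c < m"
  then have C: "C c \<noteq> {}" "C c \<subseteq> D" "\<forall>x\<in>C c. \<forall>y\<in>C c. x \<noteq> y \<longrightarrow> \<not> A x y"
    using model by (simp_all add: indep_model_def)
  show "v ` C c \<noteq> {}"
    using C(1) by simp
  show "v ` C c \<subseteq> D'"
    using C(2) v(2) by blast
  fix x y assume "x \<in> v ` C c" "y \<in> v ` C c" "x \<noteq> y"
  then obtain a b where "a \<in> C c" "b \<in> C c" "a \<noteq> b" "x = v a" "y = v b"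
    by blast
  then show "\<not> A' x y"
    using A C by blast
next
  fix c d assume cd: "c < m" "d < m" "c \<noteq> d"
  then have C: "C c \<subseteq> D" "C d \<subseteq> D" "C c \<inter> C d = {}" "(\<exists>x\<in>C c. \<exists>y\<in>C d. A x y) = R c d"
    using model by (simp_all add: indep_model_def)
  show "v ` C c \<inter> v ` C d = {}"
    using inj_on_image_Int[OF v(1) C(1,2)] C(3) by simp
  have "(\<exists>x\<in>v ` C c. \<exists>y\<in>v ` C d. A' x y) \<longleftrightarrow> (\<exists>x\<in>C c. \<exists>y\<in>C d. A' (v x) (v y))"
    by blast
  also have "\<dots> \<longleftrightarrow> (\<exists>x\<in>C c. \<exists>y\<in>C d. A x y)"
    using A C(1-3) by (metis disjoint_iff subsetD)
  finally show "(\<exists>x\<in>v ` C c. \<exists>y\<in>v ` C d. A' x y) = R c d"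
    using C(4) by simp
qed

lemma indep_model_induced_delete:
  assumes "indep_model (adj G) (verts G) m C R" "\<forall>c<m. C c \<inter> X = {}"
  shows "indep_model (adj (induced_delete G X)) (verts (induced_delete G X)) m C R"
proof -
  have "(\<exists>x\<in>C c. \<exists>y\<in>C d. adj (induced_delete G X) x y) \<longleftrightarrow> (\<exists>x\<in>C c. \<exists>y\<in>C d. adj G x y)"
    if "c < m" "d < m" for c d
    using assms(2) that unfolding adj_induced_delete by blast
  then show ?thesis
    using assms unfolding indep_model_def adj_induced_delete by auto
qed

lemma indep_model_indepD:
  "indep_model A D m C R \<Longrightarrow> c < m \<Longrightarrow> x \<in> C c \<Longrightarrow> y \<in> C c \<Longrightarrow> x \<noteq> y \<Longrightarrow> \<not> A x y"
  by (simp add: indep_model_def)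

lemma indep_model_disjointD:
  "indep_model A D m C R \<Longrightarrow> c < m \<Longrightarrow> d < m \<Longrightarrow> x \<in> C c \<Longrightarrow> x \<in> C d \<Longrightarrow> c = d"
  unfolding indep_model_def by blast

text \<open>The surviving vertex \<open>v\<close> inherits the neighbours of \<open>u\<close>, which lies in the same set.\<close>

lemma identify_adj_between:
  assumes model: "indep_model (adj G) (verts G) m C R"
    and c: "c < m" "u \<in> C c" "v \<in> C c" "u \<noteq> v" and de: "d < m" "e < m" "d \<noteq> e"
  shows "(\<exists>x\<in>C d - {u}. \<exists>y\<in>C e - {u}. adj (identify G u v) x y) \<longleftrightarrow> (\<exists>x\<in>C d. \<exists>y\<in>C e. adj G x y)"
proof
  assume "\<exists>x\<in>C d - {u}. \<exists>y\<in>C e - {u}. adj (identify G u v) x y"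
  then obtain x y where xy: "x \<in> C d" "y \<in> C e" "x \<noteq> u" "y \<noteq> u"
    and "adj G x y \<or> (x = v \<and> adj G u y) \<or> (y = v \<and> adj G x u)"
    by (auto simp: adj_identify adj_commute)
  moreover have "u \<in> C d" if "x = v"
    using indep_model_disjointD[OF model de(1) c(1)] xy(1) c(2,3) that by blast
  moreover have "u \<in> C e" if "y = v"
    using indep_model_disjointD[OF model de(2) c(1)] xy(2) c(2,3) that by blast
  ultimately show "\<exists>x\<in>C d. \<exists>y\<in>C e. adj G x y"
    by blast
next
  assume "\<exists>x\<in>C d. \<exists>y\<in>C e. adj G x y"
  then obtain x y where xy: "x \<in> C d" "y \<in> C e" "adj G x y"
    by blast
  consider "x \<noteq> u" "y \<noteq> u" | "x = u" | "y = u"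
    by blast
  then show "\<exists>x\<in>C d - {u}. \<exists>y\<in>C e - {u}. adj (identify G u v) x y"
  proof cases
    case 1
    then show ?thesis using xy by (auto simp: adj_identify)
  next
    case 2
    then have "d = c"
      using indep_model_disjointD[OF model de(1) c(1)] xy(1) c(2) by blast
    then have "v \<in> C d - {u}" "y \<in> C e - {u}"
      using indep_model_disjointD[OF model de(2) c(1), of y] xy(2) de(3) c by auto
    moreover have "adj (identify G u v) v y"
      using 2 xy calculation by (simp add: adj_identify)
    ultimately show ?thesis by blast
  next
    case 3
    then have "e = c"
      using indep_model_disjointD[OF model de(2) c(1)] xy(2) c(2) by blast
    then have "x \<in> C d - {u}" "v \<in> C e - {u}"
      using indep_model_disjointD[OF model de(1) c(1), of x] xy(1) de(3) c by auto
    moreover have "adj (identify G u v) x v"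
      using 3 xy calculation by (simp add: adj_identify adj_commute)
    ultimately show ?thesis by blast
  qed
qed

lemma identify_indep:
  assumes model: "indep_model (adj G) (verts G) m C R"
    and c: "c < m" "u \<in> C c" "v \<in> C c" and d: "d < m" "x \<in> C d - {u}" "y \<in> C d - {u}" "x \<noteq> y"
  shows "\<not> adj (identify G u v) x y"
proof
  assume "adj (identify G u v) x y"
  then consider "adj G x y" | "x = v" "adj G u y" | "y = v" "adj G u x"
    using d by (auto simp: adj_identify)
  then show False
  proof cases
    case 1
    then show False using indep_model_indepD[OF model] d by blast
  next
    case 2
    then have "d = c" using indep_model_disjointD[OF model] c d by blast
    then show False using 2 indep_model_indepD[OF model c(1,2), of y] d by auto
  next
    case 3
    then have "d = c" using indep_model_disjointD[OF model] c d by blast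
    then show False using 3 indep_model_indepD[OF model c(1,2), of x] d by auto
  qed
qed

lemma indep_model_identify:
  assumes model: "indep_model (adj G) (verts G) m C R"
    and c: "c < m" "u \<in> C c" "v \<in> C c" "u \<noteq> v"
  shows "indep_model (adj (identify G u v)) (verts (identify G u v)) m (\<lambda>d. C d - {u}) R"
proof -
  have "C d - {u} \<noteq> {}" if "d < m" for d
  proof (cases "d = c")
    case True
    then show ?thesis using c by blast
  next
    case False
    then have "u \<notin> C d" using indep_model_disjointD[OF model] that c by blast
    then show ?thesis using model that by (simp add: indep_model_def)
  qed
  moreover have "(C d - {u}) \<inter> (C e - {u}) = {}" if "d < m" "e < m" "d \<noteq> e" for d e
    using model that unfolding indep_model_def by blast
  moreover have "C d - {u} \<subseteq> verts (identify G u v)" if "d < m" for d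
    using model that unfolding indep_model_def by auto
  ultimately show ?thesis
    using model identify_adj_between[OF model c] identify_indep[OF model c(1-3)]
    unfolding indep_model_def by simp
qed

lemma projection_singleton_model:
  assumes "is_graph G" "indep_model (adj G) (verts G) m C R" "verts G = (\<Union>c<m. C c)"
  shows "\<exists>G' r. projection_step\<^sup>*\<^sup>* G G' \<and> is_graph G' \<and>
    indep_model (adj G') (verts G') m (\<lambda>c. {r c}) R \<and> verts G' = r ` {..<m}"
  using assms
proof (induction "card (verts G)" arbitrary: G C rule: less_induct)
  case less
  show ?case
  proof (cases "\<exists>c<m. \<exists>u\<in>C c. \<exists>v\<in>C c. u \<noteq> v")
    case True
    then obtain c u v where c: "c < m" "u \<in> C c" "v \<in> C c" "u \<noteq> v"
      by blast
    have uv: "u \<in> verts G" "v \<in> verts G" "\<not> adj G u v"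
      using less.prems(2) c unfolding indep_model_def by auto
    let ?G' = "identify G u v"
    have step: "projection_step G ?G'"
      using projection_step.ident uv c(4) by blast
    have card: "card (verts ?G') < card (verts G)"
      using less.prems(1) uv(1) card_Diff1_less[of "verts G" u] by (simp add: is_graph_def)
    have graph: "is_graph ?G'"
      using is_graph_identify less.prems(1) uv c(4) by blast
    have model: "indep_model (adj ?G') (verts ?G') m (\<lambda>d. C d - {u}) R"
      using indep_model_identify less.prems(2) c by blast
    have verts: "verts ?G' = (\<Union>d<m. C d - {u})"
      using less.prems(3) by auto
    obtain G'' r where "projection_step\<^sup>*\<^sup>* ?G' G''" "is_graph G''"
      "indep_model (adj G'') (verts G'') m (\<lambda>c. {r c}) R" "verts G'' = r ` {..<m}"
      using less.hyps[OF card graph model verts] by blast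
    then show ?thesis
      using converse_rtranclp_into_rtranclp[of projection_step, OF step] by blast
  next
    case False
    define r where "r c = the_elem (C c)" for c
    have r: "C c = {r c}" if "c < m" for c
    proof -
      have "C c \<noteq> {}"
        using less.prems(2) that by (simp add: indep_model_def)
      then obtain x where "x \<in> C c"
        by blast
      then have "C c = {x}"
        using False that by blast
      then show ?thesis
        by (simp add: r_def)
    qed
    have "indep_model (adj G) (verts G) m (\<lambda>c. {r c}) R"
      using less.prems(2) r unfolding indep_model_def by simp
    moreover have "verts G = r ` {..<m}"
      using less.prems(3) r by auto
    ultimately show ?thesis
      using less.prems(1) by blast
  qed
qed

lemma graph_iso_singleton_model:
  assumes G: "is_graph G" and model: "indep_model (adj G) (verts G) m (\<lambda>c. {r c}) R"
    and VG: "verts G = r ` {..<m}"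
    and VK: "verts K = {0..<m}" and EK: "\<forall>c<m. \<forall>d<m. adj K c d \<longleftrightarrow> c \<noteq> d \<and> R c d"
  shows "graph_iso G K"
proof -
  have "inj_on r {..<m}"
    using model unfolding indep_model_def inj_on_def by blast
  then have bij: "bij_betw r {..<m} (verts G)"
    by (simp add: VG bij_betw_imageI)
  have adj_r: "adj G (r c) (r d) \<longleftrightarrow> adj K c d" if "c < m" "d < m" for c d
  proof (cases "c = d")
    case True
    then show ?thesis using G EK that is_graph_adjD(3) by blast
  next
    case False
    then show ?thesis using model EK that unfolding indep_model_def by simp
  qed
  show ?thesis
    unfolding graph_iso_def
  proof (intro exI conjI ballI)
    show "bij_betw (inv_into {..<m} r) (verts G) (verts K)"
      using bij_betw_inv_into[OF bij] VK by (simp add: atLeast0LessThan)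
    fix x y assume "x \<in> verts G" "y \<in> verts G"
    then obtain c d where "c < m" "d < m" "x = r c" "y = r d"
      using VG by auto
    then show "adj G x y \<longleftrightarrow> adj K (inv_into {..<m} r x) (inv_into {..<m} r y)"
      using adj_r bij by (simp add: bij_betw_inv_into_left)
  qed
qed

lemma indep_model_projection:
  assumes G: "is_graph G" and model: "indep_model (adj G) (verts G) m C R"
    and VK: "verts K = {0..<m}" and EK: "\<forall>c<m. \<forall>d<m. adj K c d \<longleftrightarrow> c \<noteq> d \<and> R c d"
  shows "\<exists>H. is_projection H G \<and> graph_iso H K"
proof -
  let ?X = "verts G - (\<Union>c<m. C c)"
  let ?G1 = "induced_delete G ?X"
  have CV: "C c \<subseteq> verts G" if "c < m" for c
    using model that by (simp add: indep_model_def)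
  have "projection_step\<^sup>*\<^sup>* G ?G1"
    using G by (intro projection_induced_delete) (auto simp: is_graph_def)
  moreover have "is_graph ?G1"
    using G by (rule is_graph_induced_delete)
  moreover have "indep_model (adj ?G1) (verts ?G1) m C R"
    using model by (rule indep_model_induced_delete) blast
  moreover have "verts ?G1 = (\<Union>c<m. C c)"
    using CV by auto
  ultimately obtain H r where "projection_step\<^sup>*\<^sup>* G H" "is_graph H"
    "indep_model (adj H) (verts H) m (\<lambda>c. {r c}) R" "verts H = r ` {..<m}"
    using projection_singleton_model by (meson rtranclp_trans)
  then show ?thesis
    using graph_iso_singleton_model VK EK unfolding is_projection_def by blast
qed

lemma contains_if_indep_model:
  assumes "projection_closed \<H>" "H \<in> \<H>" "is_graph H" "indep_model (adj H) (verts H) m C R"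
    and "verts K = {0..<m}" "\<forall>c<m. \<forall>d<m. adj K c d \<longleftrightarrow> c \<noteq> d \<and> R c d"
  shows "contains \<H> K"
  using indep_model_projection[OF assms(3-6)] assms(1,2)
  unfolding contains_def projection_closed_def by blast

section \<open>Obstructions to extended bicliques\<close>

definition induced_embedding :: "('a \<Rightarrow> 'a \<Rightarrow> bool) \<Rightarrow> 'a set \<Rightarrow> graph \<Rightarrow> ('a \<Rightarrow> nat) \<Rightarrow> bool" where
  "induced_embedding A D G v \<longleftrightarrow> inj_on v D \<and> v ` D \<subseteq> verts G \<and>
     (\<forall>x\<in>D. \<forall>y\<in>D. x \<noteq> y \<longrightarrow> (adj G (v x) (v y) \<longleftrightarrow> A x y))"

lemma indep_model_induced_embedding:
  assumes "induced_embedding A D G v" "indep_model A D m C R"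
  shows "indep_model (adj G) (verts G) m (\<lambda>c. v ` C c) R"
  using assms(1) by (intro indep_model_image[OF assms(2)]) (auto simp: induced_embedding_def)

text \<open>The three obstructions to being an extended biclique: the triangle (\<open>\<tau> = 0\<close>),
  the path \<open>0-1-2-3\<close> (\<open>\<tau> = 1\<close>) and the matching \<open>01, 23\<close> (\<open>\<tau> = 2\<close>).\<close>

definition obst_size :: "nat \<Rightarrow> nat" where
  "obst_size \<tau> = (if \<tau> = 0 then 3 else 4)"

definition obst_adj :: "nat \<Rightarrow> nat \<Rightarrow> nat \<Rightarrow> bool" where
  "obst_adj \<tau> p q \<longleftrightarrow> p \<noteq> q \<and>
     (if \<tau> = 0 then True else if \<tau> = 1 then p = Suc q \<or> q = Suc p else p div 2 = q div 2)"

definition induced_obstruction :: "graph \<Rightarrow> nat \<Rightarrow> (nat \<Rightarrow> nat) \<Rightarrow> bool" where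
  "induced_obstruction G \<tau> g \<longleftrightarrow> \<tau> < 3 \<and> induced_embedding (obst_adj \<tau>) {..<obst_size \<tau>} G g"

definition obst_verts :: "nat \<Rightarrow> (nat \<Rightarrow> nat) \<Rightarrow> nat set" where
  "obst_verts \<tau> g = g ` {..<obst_size \<tau>}"

lemma obst_size_le: "obst_size \<tau> \<le> 4"
  by (simp add: obst_size_def)

lemma obst_adj_commute: "obst_adj \<tau> p q \<longleftrightarrow> obst_adj \<tau> q p"
  by (auto simp: obst_adj_def)

lemma obst_adj_irrefl: "\<not> obst_adj \<tau> p p"
  by (simp add: obst_adj_def)

lemma card_obst_verts: "card (obst_verts \<tau> g) \<le> 4"
  unfolding obst_verts_def using card_image_le[of "{..<obst_size \<tau>}" g] obst_size_le[of \<tau>] by simp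

lemma all_less_3: "(\<forall>p<3. P p) \<longleftrightarrow> P 0 \<and> P 1 \<and> P (2::nat)"
  by (auto simp: eval_nat_numeral less_Suc_eq)

lemma all_less_4: "(\<forall>p<4. P p) \<longleftrightarrow> P 0 \<and> P 1 \<and> P 2 \<and> P (3::nat)"
  by (auto simp: eval_nat_numeral less_Suc_eq)

lemma induced_obstruction_list:
  assumes "\<tau> < 3" "length xs = obst_size \<tau>" "distinct xs" "set xs \<subseteq> verts G"
    and "\<forall>p<obst_size \<tau>. \<forall>q<obst_size \<tau>. p \<noteq> q \<longrightarrow> (adj G (xs ! p) (xs ! q) \<longleftrightarrow> obst_adj \<tau> p q)"
  shows "induced_obstruction G \<tau> (\<lambda>p. xs ! p)"
  using assms unfolding induced_obstruction_def induced_embedding_def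
  by (auto simp: inj_on_def nth_eq_iff_index_eq set_conv_nth)

lemma induced_obstruction_triangle:
  assumes "is_graph G" "adj G x y" "adj G y z" "adj G x z"
  shows "induced_obstruction G 0 (\<lambda>p. [x, y, z] ! p)"
  using assms is_graph_adjD[OF assms(1)]
  by (intro induced_obstruction_list)
    (auto simp: obst_size_def obst_adj_def all_less_3 adj_commute)

lemma induced_obstruction_path:
  assumes "is_graph G" "distinct [x, y, z, w]" "adj G x y" "adj G y z" "adj G z w"
    "\<not> adj G x z" "\<not> adj G y w" "\<not> adj G x w"
  shows "induced_obstruction G 1 (\<lambda>p. [x, y, z, w] ! p)"
  using assms is_graph_adjD[OF assms(1)]
  by (intro induced_obstruction_list)
    (auto simp: obst_size_def obst_adj_def all_less_4 adj_commute)

lemma induced_obstruction_matching: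
  assumes "is_graph G" "distinct [x, y, z, w]" "adj G x y" "adj G z w"
    "\<not> adj G x z" "\<not> adj G x w" "\<not> adj G y z" "\<not> adj G y w"
  shows "induced_obstruction G 2 (\<lambda>p. [x, y, z, w] ! p)"
  using assms is_graph_adjD[OF assms(1)]
  by (intro induced_obstruction_list)
    (auto simp: obst_size_def obst_adj_def all_less_4 adj_commute)

context
  fixes G :: graph
  assumes triangle_free: "\<And>x y z. adj G x y \<Longrightarrow> adj G y z \<Longrightarrow> \<not> adj G x z"
    and path_free: "\<And>x y z w. distinct [x, y, z, w] \<Longrightarrow> adj G x y \<Longrightarrow> adj G y z \<Longrightarrow> adj G z w \<Longrightarrow>
      adj G x z \<or> adj G y w \<or> adj G x w"
    and matching_free: "\<And>x y z w. distinct [x, y, z, w] \<Longrightarrow> adj G x y \<Longrightarrow> adj G z w \<Longrightarrow>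
      adj G x z \<or> adj G x w \<or> adj G y z \<or> adj G y w"
    and graph: "is_graph G"
begin

lemma edge_between_neighbourhoods:
  assumes ab: "adj G a b" and xy: "adj G x y"
  shows "(adj G x b \<and> adj G a y) \<or> (adj G y b \<and> adj G a x)"
proof -
  have neq: "a \<noteq> b" "x \<noteq> y"
    using is_graph_adjD(3)[OF graph] ab xy by auto
  consider "x = a" | "x = b" | "y = a" | "y = b" | "distinct [x, y, a, b]"
    using neq by auto
  then show ?thesis
  proof cases
    case 5
    have path_end: "adj G u z" if "distinct [u, v, w, z]" "adj G u v" "adj G v w" "adj G w z" for u v w z
      using path_free[OF that] triangle_free[OF that(2,3)] triangle_free[OF that(3,4)] by blast
    have yx: "adj G y x" and ba: "adj G b a"
      using xy ab by (simp_all add: adj_commute)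
    have d: "distinct [y, x, a, b]" "distinct [y, x, b, a]" "distinct [x, y, a, b]" "distinct [x, y, b, a]"
      using 5 by auto
    from matching_free[OF 5 xy ab] show ?thesis
    proof (elim disjE)
      assume "adj G x a"
      then show ?thesis using path_end[OF d(1) yx _ ab] by (simp add: adj_commute)
    next
      assume "adj G x b"
      then show ?thesis using path_end[OF d(2) yx _ ba] by (simp add: adj_commute)
    next
      assume "adj G y a"
      then show ?thesis using path_end[OF d(3) xy _ ab] by (simp add: adj_commute)
    next
      assume "adj G y b"
      then show ?thesis using path_end[OF d(4) xy _ ba] by (simp add: adj_commute)
    qed
  qed (use ab xy in \<open>auto simp: adj_commute\<close>)
qed

lemma adj_between_neighbourhoods:
  assumes ab: "adj G a b" and x: "adj G x b" and y: "adj G a y"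
  shows "adj G x y"
proof (cases "x = a \<or> y = b")
  case True
  then show ?thesis using x y by auto
next
  case False
  have "x \<noteq> y"
    using triangle_free[OF y] x ab by (metis adj_commute)
  then have "distinct [x, b, a, y]"
    using False is_graph_adjD(3)[OF graph] ab x y by auto
  moreover have ba: "adj G b a"
    using ab by (simp add: adj_commute)
  moreover have "\<not> adj G x a" "\<not> adj G b y"
    using triangle_free[OF x ba] triangle_free[OF ba y] by simp_all
  ultimately show ?thesis
    using path_free x y by blast
qed

lemma extended_biclique_if_free: "extended_biclique G"
proof (cases "edges G = {}")
  case True
  then show ?thesis
    unfolding extended_biclique_def by (intro exI[of _ "{}"]) auto
next
  case False
  then obtain e where "e \<in> edges G"
    by blast
  then obtain a b where ab: "adj G a b"
    using graph by (metis is_graph_edgeE)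
  define A where "A = {x \<in> verts G. adj G x b}"
  define B where "B = {y \<in> verts G. adj G a y}"
  have "A \<inter> B = {}"
    using triangle_free ab unfolding A_def B_def by (auto simp: adj_commute)
  moreover have "edges G = {{x, y} | x y. x \<in> A \<and> y \<in> B}"
  proof (intro set_eqI iffI)
    fix e assume e: "e \<in> edges G"
    then obtain x y where exy: "e = {x, y}"
      using graph by (blast elim: is_graph_edgeE)
    then have xy: "adj G x y" "x \<in> verts G" "y \<in> verts G"
      using e is_graph_adjD[OF graph] by auto
    from edge_between_neighbourhoods[OF ab xy(1)]
    have "(x \<in> A \<and> y \<in> B) \<or> (y \<in> A \<and> x \<in> B)"
      using xy unfolding A_def B_def by blast
    then show "e \<in> {{x, y} | x y. x \<in> A \<and> y \<in> B}"
      using exy by (auto simp: insert_commute)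
  next
    fix e assume "e \<in> {{x, y} | x y. x \<in> A \<and> y \<in> B}"
    then obtain x y where "e = {x, y}" "adj G x b" "adj G a y"
      unfolding A_def B_def by blast
    then show "e \<in> edges G"
      using adj_between_neighbourhoods[OF ab] by blast
  qed
  moreover have "A \<union> B \<subseteq> verts G"
    unfolding A_def B_def by auto
  ultimately show ?thesis
    unfolding extended_biclique_def by blast
qed

end

lemma induced_obstruction_if_not_extended_biclique:
  assumes G: "is_graph G" and "\<not> extended_biclique G"
  shows "\<exists>\<tau> g. induced_obstruction G \<tau> g"
proof (rule ccontr)
  assume none: "\<nexists>\<tau> g. induced_obstruction G \<tau> g"
  have "extended_biclique G"
  proof (rule extended_biclique_if_free)
    show "\<not> adj G x z" if "adj G x y" "adj G y z" for x y z
      using induced_obstruction_triangle[OF G that] none by blast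
    show "adj G x z \<or> adj G y w \<or> adj G x w"
      if "distinct [x, y, z, w]" "adj G x y" "adj G y z" "adj G z w" for x y z w
      using induced_obstruction_path[OF G that] none by blast
    show "adj G x z \<or> adj G x w \<or> adj G y z \<or> adj G y w"
      if "distinct [x, y, z, w]" "adj G x y" "adj G z w" for x y z w
      using induced_obstruction_matching[OF G that] none by blast
  qed (rule G)
  with assms(2) show False
    by blast
qed

lemma induced_obstruction_induced_delete:
  assumes "induced_obstruction (induced_delete G X) \<tau> g"
  shows "induced_obstruction G \<tau> g" "obst_verts \<tau> g \<inter> X = {}"
proof -
  have sub: "g ` {..<obst_size \<tau>} \<subseteq> verts G - X"
    using assms by (simp add: induced_obstruction_def induced_embedding_def)
  then have "\<forall>p<obst_size \<tau>. \<forall>q<obst_size \<tau>. adj (induced_delete G X) (g p) (g q) \<longleftrightarrow> adj G (g p) (g q)"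
    by (auto simp: adj_induced_delete)
  then show "induced_obstruction G \<tau> g"
    using assms sub unfolding induced_obstruction_def induced_embedding_def by auto
  show "obst_verts \<tau> g \<inter> X = {}"
    using sub unfolding obst_verts_def by blast
qed

lemma dist_ext_biclique_le_mono:
  "dist_ext_biclique_le G \<mu> \<Longrightarrow> \<mu> \<le> \<mu>' \<Longrightarrow> dist_ext_biclique_le G \<mu>'"
  unfolding dist_ext_biclique_le_def by (meson order_trans)

lemma extended_biclique_or_disjoint_obstructions:
  assumes G: "is_graph G"
  shows "dist_ext_biclique_le G (4 * k) \<or>
    (\<exists>\<tau> g. (\<forall>i<k. induced_obstruction G (\<tau> i) (g i)) \<and>
       (\<forall>i<k. \<forall>j<i. obst_verts (\<tau> i) (g i) \<inter> obst_verts (\<tau> j) (g j) = {}))"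
proof (induction k)
  case 0
  show ?case by (intro disjI2) simp
next
  case (Suc k)
  show ?case
  proof (cases "dist_ext_biclique_le G (4 * k)")
    case True
    then show ?thesis
      using dist_ext_biclique_le_mono[OF True] by simp
  next
    case False
    with Suc.IH obtain \<tau> g where obst: "\<forall>i<k. induced_obstruction G (\<tau> i) (g i)"
      and disj: "\<forall>i<k. \<forall>j<i. obst_verts (\<tau> i) (g i) \<inter> obst_verts (\<tau> j) (g j) = {}"
      by blast
    define X where "X = (\<Union>i<k. obst_verts (\<tau> i) (g i))"
    have "X \<subseteq> verts G"
      using obst unfolding X_def obst_verts_def induced_obstruction_def induced_embedding_def by auto
    moreover have "card X \<le> 4 * k"
    proof -
      have "card X \<le> (\<Sum>i<k. card (obst_verts (\<tau> i) (g i)))"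
        unfolding X_def by (rule card_UN_le) simp
      also have "\<dots> \<le> (\<Sum>i<k. 4)"
        by (rule sum_mono) (rule card_obst_verts)
      finally show ?thesis by simp
    qed
    ultimately have "\<not> extended_biclique (induced_delete G X)"
      using False unfolding dist_ext_biclique_le_def by blast
    then obtain \<tau>' g' where "induced_obstruction (induced_delete G X) \<tau>' g'"
      using induced_obstruction_if_not_extended_biclique is_graph_induced_delete[OF G] by blast
    then have new: "induced_obstruction G \<tau>' g'" "obst_verts \<tau>' g' \<inter> X = {}"
      by (rule induced_obstruction_induced_delete)+
    have "\<forall>i<Suc k. induced_obstruction G ((\<tau>(k := \<tau>')) i) ((g(k := g')) i)"
      using obst new(1) by (simp add: less_Suc_eq)
    moreover have "\<forall>i<Suc k. \<forall>j<i. obst_verts ((\<tau>(k := \<tau>')) i) ((g(k := g')) i) \<inter>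
        obst_verts ((\<tau>(k := \<tau>')) j) ((g(k := g')) j) = {}"
      using disj new(2) unfolding X_def by (auto simp: less_Suc_eq)
    ultimately show ?thesis
      by blast
  qed
qed

section \<open>Homogeneous rows of obstructions\<close>

lemma finite_set_strict_mono_enum:
  assumes "finite H" "card H = n"
  obtains \<iota> :: "nat \<Rightarrow> 'a::linorder" where "strict_mono_on {..<n} \<iota>" "\<iota> ` {..<n} = H"
proof
  let ?\<iota> = "\<lambda>k. sorted_list_of_set H ! k"
  show "strict_mono_on {..<n} ?\<iota>"
    using assms sorted_wrt_nth_less[OF strict_sorted_list_of_set, of _ _ H]
    by (intro strict_mono_onI) simp
  show "?\<iota> ` {..<n} = H"
    using assms by (metis atLeast0LessThan length_sorted_list_of_set set_sorted_list_of_set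
      nth_image take_all_iff order_refl)
qed

lemma finite_ramsey_pairs:
  fixes K :: "'a set" and n :: nat
  assumes "finite K" "K \<noteq> {}"
  shows "\<exists>N::nat. \<forall>c. (\<forall>i j. i < j \<longrightarrow> j < N \<longrightarrow> c i j \<in> K) \<longrightarrow>
    (\<exists>\<iota> col. strict_mono_on {..<n} \<iota> \<and> \<iota> ` {..<n} \<subseteq> {..<N} \<and>
      (\<forall>k l. k < l \<longrightarrow> l < n \<longrightarrow> c (\<iota> k) (\<iota> l) = col))"
proof -
  obtain h where h: "bij_betw h K {..<card K}"
    using ex_bij_betw_finite_nat[OF assms(1)] atLeast0LessThan by auto
  obtain N :: nat where N: "partn_lst {..<N} (replicate (card K) n) 2"
    using ramsey_full by blast
  have "\<exists>\<iota> col. strict_mono_on {..<n} \<iota> \<and> \<iota> ` {..<n} \<subseteq> {..<N} \<and>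
      (\<forall>k l. k < l \<longrightarrow> l < n \<longrightarrow> c (\<iota> k) (\<iota> l) = col)"
    if c: "\<forall>i j. i < j \<longrightarrow> j < N \<longrightarrow> c i j \<in> K" for c
  proof -
    define F where "F X = h (c (Min X) (Max X))" for X
    have "F \<in> nsets {..<N} 2 \<rightarrow> {..<card K}"
    proof
      fix X assume "X \<in> nsets {..<N} 2"
      then obtain a b where "X = {a, b}" "a < b" "b < N"
        unfolding nsets_def by (auto simp: card_2_iff) (metis insert_commute lessThan_iff linorder_neqE_nat)
      then show "F X \<in> {..<card K}"
        using c h unfolding F_def bij_betw_def by auto
    qed
    then obtain i H where H: "H \<in> nsets {..<N} n" and hom: "F ` nsets H 2 \<subseteq> {i}"
      using partn_lstE[OF N] by (metis length_replicate nth_replicate)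
    then obtain \<iota> where mono: "strict_mono_on {..<n} \<iota>" and \<iota>H: "\<iota> ` {..<n} = H"
      using finite_set_strict_mono_enum[of H n] unfolding nsets_def by blast
    have "c (\<iota> k) (\<iota> l) = inv_into K h i" if kl: "k < l" "l < n" for k l
    proof -
      have lt: "\<iota> k < \<iota> l"
        using strict_mono_onD[OF mono] kl by simp
      then have "{\<iota> k, \<iota> l} \<in> nsets H 2"
        using \<iota>H kl by (auto simp: nsets_def)
      then have "F {\<iota> k, \<iota> l} = i"
        using hom by blast
      then have "h (c (\<iota> k) (\<iota> l)) = i"
        using lt unfolding F_def by simp
      moreover have "c (\<iota> k) (\<iota> l) \<in> K"
        using c lt \<iota>H H kl unfolding nsets_def by auto
      ultimately show ?thesis
        using h unfolding bij_betw_def by (metis inv_into_f_f)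
    qed
    moreover have "\<iota> ` {..<n} \<subseteq> {..<N}"
      using \<iota>H H unfolding nsets_def by simp
    ultimately show ?thesis
      using mono by blast
  qed
  then show ?thesis
    by blast
qed

text \<open>Adjacency on rows of copies of the pattern \<open>W\<close>, any two rows being joined in the same way:
  \<open>(p, q) \<in> P\<close> records that position \<open>p\<close> of an earlier row sees position \<open>q\<close> of a later one.\<close>

definition homog_adj :: "(nat \<times> nat) set \<Rightarrow> (nat \<Rightarrow> nat \<Rightarrow> bool) \<Rightarrow> nat \<times> nat \<Rightarrow> nat \<times> nat \<Rightarrow> bool" where
  "homog_adj P W a b \<longleftrightarrow> (if fst a < fst b then (snd a, snd b) \<in> P
     else if fst b < fst a then (snd b, snd a) \<in> P else W (snd a) (snd b))"

lemma induced_embedding_rows: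
  assumes obst: "\<forall>k<n. induced_obstruction G \<sigma> (g k)"
    and disj: "\<forall>k<n. \<forall>l<k. obst_verts \<sigma> (g k) \<inter> obst_verts \<sigma> (g l) = {}"
    and P: "\<forall>k l p q. k < l \<longrightarrow> l < n \<longrightarrow> p < obst_size \<sigma> \<longrightarrow> q < obst_size \<sigma> \<longrightarrow>
      (adj G (g k p) (g l q) \<longleftrightarrow> (p, q) \<in> P)"
  shows "induced_embedding (homog_adj P (obst_adj \<sigma>)) ({..<n} \<times> {..<obst_size \<sigma>}) G (\<lambda>(k, p). g k p)"
proof -
  have row: "induced_embedding (obst_adj \<sigma>) {..<obst_size \<sigma>} G (g k)" if "k < n" for k
    using obst that by (simp add: induced_obstruction_def)
  have disj': "g k p \<noteq> g l q"
    if "k < n" "l < n" "k \<noteq> l" "p < obst_size \<sigma>" "q < obst_size \<sigma>" for k l p q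
  proof -
    have "g k p \<in> obst_verts \<sigma> (g k)" "g l q \<in> obst_verts \<sigma> (g l)"
      using that by (simp_all add: obst_verts_def)
    moreover have "obst_verts \<sigma> (g k) \<inter> obst_verts \<sigma> (g l) = {}"
    proof (cases "l < k")
      case True
      then show ?thesis using disj that(1) by blast
    next
      case False
      then have "k < l" using that(3) by simp
      then have "obst_verts \<sigma> (g l) \<inter> obst_verts \<sigma> (g k) = {}"
        using disj that(2) by blast
      then show ?thesis by (simp add: Int_commute)
    qed
    ultimately show ?thesis
      by (metis disjoint_iff)
  qed
  show ?thesis
    unfolding induced_embedding_def
  proof (intro conjI ballI impI)
    show "inj_on (\<lambda>(k, p). g k p) ({..<n} \<times> {..<obst_size \<sigma>})"
    proof (rule inj_onI, clarsimp)
      fix k p l q assume kp: "k < n" "p < obst_size \<sigma>" "l < n" "q < obst_size \<sigma>" "g k p = g l q"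
      then have "k = l"
        using disj'[of k l p q] by blast
      moreover have "inj_on (g k) {..<obst_size \<sigma>}"
        using row kp(1) by (simp add: induced_embedding_def)
      ultimately show "k = l \<and> p = q"
        using kp by (simp add: inj_on_def)
    qed
    show "(\<lambda>(k, p). g k p) ` ({..<n} \<times> {..<obst_size \<sigma>}) \<subseteq> verts G"
      using row unfolding induced_embedding_def by auto
  next
    fix a b assume ab: "a \<in> {..<n} \<times> {..<obst_size \<sigma>}" "b \<in> {..<n} \<times> {..<obst_size \<sigma>}" "a \<noteq> b"
    obtain k p l q where a: "a = (k, p)" and b: "b = (l, q)"
      by fastforce
    consider "k < l" | "l < k" | "k = l"
      by linarith
    then show "adj G ((\<lambda>(k, p). g k p) a) ((\<lambda>(k, p). g k p) b) \<longleftrightarrow> homog_adj P (obst_adj \<sigma>) a b"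
    proof cases
      case 1
      then show ?thesis using P[rule_format, of k l p q] ab a b by (simp add: homog_adj_def)
    next
      case 2
      then show ?thesis using P[rule_format, of l k q p] ab a b by (simp add: homog_adj_def adj_commute)
    next
      case 3
      then have "adj G (g k p) (g k q) \<longleftrightarrow> obst_adj \<sigma> p q"
        using row[of k] ab a b unfolding induced_embedding_def by auto
      then show ?thesis using 3 a b by (simp add: homog_adj_def)
    qed
  qed
qed

definition obst_colour ::
    "graph \<Rightarrow> (nat \<Rightarrow> nat) \<Rightarrow> (nat \<Rightarrow> nat \<Rightarrow> nat) \<Rightarrow> nat \<Rightarrow> nat \<Rightarrow> nat \<times> nat \<times> (nat \<times> nat) set" where
  "obst_colour G \<tau> g i j = (\<tau> i, \<tau> j, {(p, q). p < 4 \<and> q < 4 \<and> adj G (g i p) (g j q)})"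

lemma induced_embedding_homogeneous_colour:
  assumes obst: "\<forall>i<N. induced_obstruction G (\<tau> i) (g i)"
    and disj: "\<forall>i<N. \<forall>j<i. obst_verts (\<tau> i) (g i) \<inter> obst_verts (\<tau> j) (g j) = {}"
    and n: "3 \<le> n" and mono: "strict_mono_on {..<n} \<iota>" and range: "\<iota> ` {..<n} \<subseteq> {..<N}"
    and hom: "\<forall>k l. k < l \<longrightarrow> l < n \<longrightarrow> obst_colour G \<tau> g (\<iota> k) (\<iota> l) = (\<sigma>, \<sigma>', P)"
  shows "\<sigma> < 3 \<and>
    induced_embedding (homog_adj P (obst_adj \<sigma>)) ({..<n} \<times> {..<obst_size \<sigma>}) G (\<lambda>(k, p). g (\<iota> k) p)"
proof
  have "\<tau> (\<iota> 1) = \<sigma>'" "\<tau> (\<iota> 1) = \<sigma>"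
    using hom[rule_format, of 0 1] hom[rule_format, of 1 2] n unfolding obst_colour_def by auto
  then have \<sigma>: "\<tau> (\<iota> k) = \<sigma>" if "k < n" for k
    using hom[rule_format, of 0 k] hom[rule_format, of 0 1] that n unfolding obst_colour_def
    by (cases "k = 0") auto
  have \<iota>: "\<iota> k < N" if "k < n" for k
    using range that by auto
  show "\<sigma> < 3"
    using obst \<sigma>[of 0] \<iota>[of 0] n unfolding induced_obstruction_def by auto
  show "induced_embedding (homog_adj P (obst_adj \<sigma>)) ({..<n} \<times> {..<obst_size \<sigma>}) G
      (\<lambda>(k, p). g (\<iota> k) p)"
  proof (rule induced_embedding_rows)
    show "\<forall>k<n. induced_obstruction G \<sigma> (g (\<iota> k))"
      using obst \<sigma> \<iota> by metis
    show "\<forall>k<n. \<forall>l<k. obst_verts \<sigma> (g (\<iota> k)) \<inter> obst_verts \<sigma> (g (\<iota> l)) = {}"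
      using disj \<sigma> \<iota> strict_mono_onD[OF mono] by (metis lessThan_iff order.strict_trans)
    show "\<forall>k l p q. k < l \<longrightarrow> l < n \<longrightarrow> p < obst_size \<sigma> \<longrightarrow> q < obst_size \<sigma> \<longrightarrow>
        (adj G (g (\<iota> k) p) (g (\<iota> l) q) \<longleftrightarrow> (p, q) \<in> P)"
    proof (intro allI impI)
      fix k l p q assume "k < l" "l < n" "p < obst_size \<sigma>" "q < obst_size \<sigma>"
      moreover have "p < obst_size \<sigma> \<Longrightarrow> p < 4" for p
        using obst_size_le[of \<sigma>] by linarith
      ultimately show "adj G (g (\<iota> k) p) (g (\<iota> l) q) \<longleftrightarrow> (p, q) \<in> P"
        using hom[rule_format, of k l] unfolding obst_colour_def by auto
    qed
  qed
qed

lemma homogeneous_obstruction_rows: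
  fixes n :: nat
  assumes n: "3 \<le> n"
  shows "\<exists>N::nat. \<forall>G \<tau> g. (\<forall>i<N. induced_obstruction G (\<tau> i) (g i)) \<longrightarrow>
      (\<forall>i<N. \<forall>j<i. obst_verts (\<tau> i) (g i) \<inter> obst_verts (\<tau> j) (g j) = {}) \<longrightarrow>
      (\<exists>\<sigma> P v. \<sigma> < 3 \<and> induced_embedding (homog_adj P (obst_adj \<sigma>)) ({..<n} \<times> {..<obst_size \<sigma>}) G v)"
proof -
  define K :: "(nat \<times> nat \<times> (nat \<times> nat) set) set"
    where "K = {..<3} \<times> {..<3} \<times> Pow ({..<4} \<times> {..<4})"
  have fin: "finite K"
    unfolding K_def by simp
  have "(0, 0, {}) \<in> K"
    unfolding K_def by simp
  then have ne: "K \<noteq> {}"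
    by blast
  obtain N :: nat where N: "\<forall>c. (\<forall>i j. i < j \<longrightarrow> j < N \<longrightarrow> c i j \<in> K) \<longrightarrow>
    (\<exists>\<iota> col. strict_mono_on {..<n} \<iota> \<and> \<iota> ` {..<n} \<subseteq> {..<N} \<and>
      (\<forall>k l. k < l \<longrightarrow> l < n \<longrightarrow> c (\<iota> k) (\<iota> l) = col))"
    using finite_ramsey_pairs[OF fin ne, of n] by blast
  have "\<exists>\<sigma> P v. \<sigma> < 3 \<and> induced_embedding (homog_adj P (obst_adj \<sigma>)) ({..<n} \<times> {..<obst_size \<sigma>}) G v"
    if obst: "\<forall>i<N. induced_obstruction G (\<tau> i) (g i)"
      and disj: "\<forall>i<N. \<forall>j<i. obst_verts (\<tau> i) (g i) \<inter> obst_verts (\<tau> j) (g j) = {}" for G \<tau> g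
  proof -
    have "\<tau> i < 3" if "i < N" for i
      using obst that by (simp add: induced_obstruction_def)
    then have "\<forall>i j. i < j \<longrightarrow> j < N \<longrightarrow> obst_colour G \<tau> g i j \<in> K"
      unfolding obst_colour_def K_def by (simp add: subset_iff)
    then obtain \<iota> col where \<iota>: "strict_mono_on {..<n} \<iota>" "\<iota> ` {..<n} \<subseteq> {..<N}"
      and hom: "\<forall>k l. k < l \<longrightarrow> l < n \<longrightarrow> obst_colour G \<tau> g (\<iota> k) (\<iota> l) = col"
      using N by blast
    obtain \<sigma> \<sigma>' P where "col = (\<sigma>, \<sigma>', P)"
      by (cases col) auto
    then show ?thesis
      using induced_embedding_homogeneous_colour[OF obst disj n \<iota>, of \<sigma> \<sigma>' P] hom by blast
  qed
  then show ?thesis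
    by blast
qed

section \<open>Cliques and complete tripartite graphs in homogeneous rows\<close>

lemma clique_model_loop:
  assumes "p < L" "(p, p) \<in> P" "t \<le> n"
  shows "indep_model (homog_adj P W) ({..<n} \<times> {..<L}) t (\<lambda>c. {(c, p)}) (\<lambda>_ _. True)"
  using assms unfolding indep_model_def by (auto simp: homog_adj_def)

lemma clique_model_asymmetric:
  assumes "p < L" "q < L" "(p, q) \<in> P" "(q, p) \<notin> P" "2 * t \<le> n"
  shows "indep_model (homog_adj P W) ({..<n} \<times> {..<L}) t
    (\<lambda>c. {(2 * c, q), (2 * c + 1, p)}) (\<lambda>_ _. True)"
proof -
  have "homog_adj P W (2 * c + 1, p) (2 * d, q)" if "c < d" for c d
    using that assms(3) by (simp add: homog_adj_def)
  moreover have "homog_adj P W (2 * c, q) (2 * d + 1, p)" if "d < c" for c d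
    using that assms(3) by (simp add: homog_adj_def)
  ultimately have "\<exists>x\<in>{(2 * c, q), (2 * c + 1, p)}. \<exists>y\<in>{(2 * d, q), (2 * d + 1, p)}. homog_adj P W x y"
    if "c \<noteq> d" for c d
    using that by (cases "c < d") auto
  then show ?thesis
    using assms unfolding indep_model_def by (auto simp: homog_adj_def)
qed

lemma clique_model_symmetric:
  assumes "p < L" "q < L" "p \<noteq> q" "(p, q) \<in> P" "(q, p) \<in> P" "\<not> W p q" "\<not> W q p" "t \<le> n"
  shows "indep_model (homog_adj P W) ({..<n} \<times> {..<L}) t (\<lambda>c. {(c, p), (c, q)}) (\<lambda>_ _. True)"
proof -
  have "homog_adj P W (c, p) (d, q)" if "c \<noteq> d" for c d
    using that assms(4,5) by (cases "c < d") (auto simp: homog_adj_def)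
  then show ?thesis
    using assms unfolding indep_model_def by (auto simp: homog_adj_def)
qed

text \<open>Read as a pair \<open>(x div t, x mod t)\<close>, a row \<open>x\<close> with \<open>x div t = c < x mod t = e\<close>
  carries the matching edge joining the branch sets \<open>c\<close> and \<open>e\<close>.\<close>

definition matching_branch :: "nat \<Rightarrow> nat \<Rightarrow> nat \<Rightarrow> nat \<Rightarrow> (nat \<times> nat) set" where
  "matching_branch t p q c = {(x, p) | x. x div t = c} \<union> {(x, q) | x. x mod t = c \<and> x div t < c}"

lemma homog_adj_matching:
  assumes "\<forall>r\<in>{p, q}. \<forall>r'\<in>{p, q}. (r, r') \<notin> P" "W p q" "W q p"
    and "snd a \<in> {p, q}" "snd b \<in> {p, q}" "a \<noteq> b"
  shows "homog_adj P W a b \<longleftrightarrow> fst a = fst b"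
  using assms by (cases a; cases b) (auto simp: homog_adj_def)

lemma mem_matching_branch:
  "a \<in> matching_branch t p q c \<longleftrightarrow>
    (snd a = p \<and> fst a div t = c) \<or> (snd a = q \<and> fst a mod t = c \<and> fst a div t < c)"
  by (cases a) (auto simp: matching_branch_def)

lemma matching_branch_adjacent:
  assumes "W p q" "W q p" "c < t" "e < t" "c \<noteq> e"
  shows "\<exists>a\<in>matching_branch t p q c. \<exists>b\<in>matching_branch t p q e. homog_adj P W a b"
proof -
  have row: "(c * t + e, p) \<in> matching_branch t p q c" "(c * t + e, q) \<in> matching_branch t p q e"
    if "c < e" "e < t" for c e
    using that unfolding mem_matching_branch by simp_all
  show ?thesis
  proof (cases "c < e")
    case True
    moreover have "homog_adj P W (c * t + e, p) (c * t + e, q)"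
      using assms(1) by (simp add: homog_adj_def)
    ultimately show ?thesis using row assms(4) by blast
  next
    case False
    then have "e < c" using assms(5) by simp
    moreover have "homog_adj P W (e * t + c, q) (e * t + c, p)"
      using assms(2) by (simp add: homog_adj_def)
    ultimately show ?thesis using row assms(3) by blast
  qed
qed

lemma clique_model_matching:
  assumes "p < L" "q < L" "p \<noteq> q" "\<forall>r\<in>{p, q}. \<forall>r'\<in>{p, q}. (r, r') \<notin> P" "W p q" "W q p"
    and "t * t \<le> n"
  shows "indep_model (homog_adj P W) ({..<n} \<times> {..<L}) t (matching_branch t p q) (\<lambda>_ _. True)"
  unfolding indep_model_def
proof (intro conjI allI impI ballI)
  have adj: "homog_adj P W a b \<longleftrightarrow> fst a = fst b"
    if "a \<in> matching_branch t p q c" "b \<in> matching_branch t p q e" "a \<noteq> b" for a b c e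
    using homog_adj_matching[OF assms(4-6)] that unfolding mem_matching_branch by blast
  fix c assume c: "c < t"
  then have "(c * t, p) \<in> matching_branch t p q c"
    by (simp add: mem_matching_branch)
  then show "matching_branch t p q c \<noteq> {}"
    by blast
  have "x < n" if "x div t < t" for x
    using that c assms(7) div_less_iff_less_mult[of t x t] by simp
  then show "matching_branch t p q c \<subseteq> {..<n} \<times> {..<L}"
    using c assms(1,2) unfolding mem_matching_branch subset_iff by auto
  fix a b assume ab: "a \<in> matching_branch t p q c" "b \<in> matching_branch t p q c" "a \<noteq> b"
  show "\<not> homog_adj P W a b"
  proof
    assume "homog_adj P W a b"
    then have "fst a = fst b"
      using adj ab by blast
    then have "snd a \<noteq> snd b"
      using ab(3) by (simp add: prod_eq_iff)
    then show False
      using ab(1,2) \<open>fst a = fst b\<close> unfolding mem_matching_branch by auto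
  qed
next
  fix c e assume ce: "c < t" "e < t" "c \<noteq> e"
  show "matching_branch t p q c \<inter> matching_branch t p q e = {}"
  proof (rule Int_emptyI)
    fix a assume "a \<in> matching_branch t p q c" "a \<in> matching_branch t p q e"
    then show False
      using ce(3) assms(3) unfolding mem_matching_branch by auto
  qed
  show "(\<exists>a\<in>matching_branch t p q c. \<exists>b\<in>matching_branch t p q e. homog_adj P W a b) = True"
    using matching_branch_adjacent[of W p q, OF assms(5,6) ce] by simp
qed

lemma homog_adj_cases:
  assumes irrefl: "\<And>p. \<not> W p p"
  obtains (loop) p where "p < L" "(p, p) \<in> P"
  | (asymmetric) p q where "p < L" "q < L" "(p, q) \<in> P" "(q, p) \<notin> P"
  | (symmetric) p q where "p < L" "q < L" "p \<noteq> q" "(p, q) \<in> P" "(q, p) \<in> P" "\<not> W p q"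
  | (matching) p q where "p < L" "q < L" "p \<noteq> q" "\<forall>r\<in>{p, q}. \<forall>r'\<in>{p, q}. (r, r') \<notin> P" "W p q"
  | (blowup) "\<forall>p<L. \<forall>q<L. (p, q) \<in> P \<longleftrightarrow> W p q"
proof -
  consider (loop) p where "p < L" "(p, p) \<in> P"
    | (asymmetric) p q where "p < L" "q < L" "(p, q) \<in> P" "(q, p) \<notin> P"
    | (symmetric) p q where "p < L" "q < L" "p \<noteq> q" "(p, q) \<in> P" "(q, p) \<in> P" "\<not> W p q"
    | (matching) p q where "p < L" "q < L" "p \<noteq> q" "(p, q) \<notin> P" "(q, p) \<notin> P" "W p q"
      "\<forall>p<L. (p, p) \<notin> P"
    | (blowup) "\<forall>p<L. \<forall>q<L. (p, q) \<in> P \<longleftrightarrow> W p q"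
    \<comment> \<open>otherwise \<open>P\<close> is symmetric, contained in \<open>W\<close>, and a pair in \<open>W\<close> but not in \<open>P\<close>
      is a matching pair\<close>
    using irrefl by (metis (full_types))
  then show ?thesis
  proof cases
    case (matching p q)
    then show ?thesis using that(4)[of p q] by blast
  qed (use that in blast)+
qed

text \<open>The branch sets of \<open>K\<^sub>s\<^sub>,\<^sub>s\<^sub>,\<^sub>s\<close> in a blow-up of an obstruction: the \<open>r\<close>-th
  vertex of the part \<open>\<pi>\<close>. For the matching they use the two rows \<open>r\<close> and \<open>s + r\<close>.\<close>

definition tripartite_branch :: "nat \<Rightarrow> nat \<Rightarrow> nat \<Rightarrow> nat \<Rightarrow> (nat \<times> nat) set" where
  "tripartite_branch \<sigma> s \<pi> r =
     (if \<sigma> = 0 then {(r, \<pi>)}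
      else if \<sigma> = 1 then (if \<pi> = 0 then {(r, 0), (r, 3)} else {(r, \<pi>)})
      else if \<pi> = 0 then {(r, 0), (r, 2)} else if \<pi> = 1 then {(r, 1), (s + r, 2)} else {(s + r, 0), (r, 3)})"

lemma less_3_cases: "(\<pi>::nat) < 3 \<Longrightarrow> \<pi> = 0 \<or> \<pi> = 1 \<or> \<pi> = 2"
  by auto

lemma tripartite_branch_indep:
  assumes "\<sigma> < 3" "\<pi> < 3" "r < s" "2 * s \<le> n"
  shows "tripartite_branch \<sigma> s \<pi> r \<noteq> {}" "tripartite_branch \<sigma> s \<pi> r \<subseteq> {..<n} \<times> {..<obst_size \<sigma>}"
    "\<forall>a\<in>tripartite_branch \<sigma> s \<pi> r. \<forall>b\<in>tripartite_branch \<sigma> s \<pi> r. \<not> obst_adj \<sigma> (snd a) (snd b)"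
  using less_3_cases[OF assms(1)] less_3_cases[OF assms(2)] assms(3,4)
  by (auto simp: tripartite_branch_def obst_size_def obst_adj_def)

lemma tripartite_branch_cross:
  assumes "\<sigma> < 3" "\<pi> < 3" "r < s" "\<pi>' < 3" "r' < s" "(\<pi>, r) \<noteq> (\<pi>', r')"
  shows "tripartite_branch \<sigma> s \<pi> r \<inter> tripartite_branch \<sigma> s \<pi>' r' = {}"
    "(\<exists>a\<in>tripartite_branch \<sigma> s \<pi> r. \<exists>b\<in>tripartite_branch \<sigma> s \<pi>' r'. obst_adj \<sigma> (snd a) (snd b))
      \<longleftrightarrow> \<pi> \<noteq> \<pi>'"
  using less_3_cases[OF assms(1)] less_3_cases[OF assms(2)] less_3_cases[OF assms(4)] assms(3,5,6)
  by (auto simp: tripartite_branch_def obst_adj_def)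

lemma indep_model_div_mod:
  assumes s: "0 < s"
    and U1: "\<And>\<pi> r. \<pi> < 3 \<Longrightarrow> r < s \<Longrightarrow>
      U \<pi> r \<noteq> {} \<and> U \<pi> r \<subseteq> D \<and> (\<forall>a\<in>U \<pi> r. \<forall>b\<in>U \<pi> r. \<not> A a b)"
    and U2: "\<And>\<pi> r \<pi>' r'. \<pi> < 3 \<Longrightarrow> r < s \<Longrightarrow> \<pi>' < 3 \<Longrightarrow> r' < s \<Longrightarrow> (\<pi>, r) \<noteq> (\<pi>', r') \<Longrightarrow>
      U \<pi> r \<inter> U \<pi>' r' = {} \<and> ((\<exists>a\<in>U \<pi> r. \<exists>b\<in>U \<pi>' r'. A a b) \<longleftrightarrow> \<pi> \<noteq> \<pi>')"
  shows "indep_model A D (3 * s) (\<lambda>c. U (c div s) (c mod s)) (\<lambda>c d. c div s \<noteq> d div s)"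
proof -
  have div: "c div s < 3" if "c < 3 * s" for c
    using that s by (simp add: div_less_iff_less_mult)
  have mod: "c mod s < s" for c
    using s by simp
  have ne: "(c div s, c mod s) \<noteq> (d div s, d mod s)" if "c \<noteq> d" for c d
    using that by (metis div_mult_mod_eq prod.inject)
  have "\<forall>c<3 * s. U (c div s) (c mod s) \<noteq> {} \<and> U (c div s) (c mod s) \<subseteq> D \<and>
      (\<forall>a\<in>U (c div s) (c mod s). \<forall>b\<in>U (c div s) (c mod s). a \<noteq> b \<longrightarrow> \<not> A a b)"
    using U1[OF div mod] by simp
  moreover have "\<forall>c<3 * s. \<forall>d<3 * s. c \<noteq> d \<longrightarrow> U (c div s) (c mod s) \<inter> U (d div s) (d mod s) = {}"
    using U2[OF div mod div mod ne] by simp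
  moreover have "\<forall>c<3 * s. \<forall>d<3 * s. c \<noteq> d \<longrightarrow>
      (\<exists>a\<in>U (c div s) (c mod s). \<exists>b\<in>U (d div s) (d mod s). A a b) = (c div s \<noteq> d div s)"
    using U2[OF div mod div mod ne] by simp
  ultimately show ?thesis
    unfolding indep_model_def by (intro conjI)
qed

lemma tripartite_model_blowup:
  assumes "\<sigma> < 3" "0 < s" "2 * s \<le> n"
  shows "indep_model (\<lambda>a b. obst_adj \<sigma> (snd a) (snd b)) ({..<n} \<times> {..<obst_size \<sigma>}) (3 * s)
    (\<lambda>c. tripartite_branch \<sigma> s (c div s) (c mod s)) (\<lambda>c d. c div s \<noteq> d div s)"
proof (rule indep_model_div_mod)
  fix \<pi> r \<pi>' r' :: nat assume "\<pi> < 3" "r < s" "\<pi>' < 3" "r' < s" "(\<pi>, r) \<noteq> (\<pi>', r')"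
  then show "tripartite_branch \<sigma> s \<pi> r \<inter> tripartite_branch \<sigma> s \<pi>' r' = {} \<and>
    (\<exists>a\<in>tripartite_branch \<sigma> s \<pi> r. \<exists>b\<in>tripartite_branch \<sigma> s \<pi>' r'. obst_adj \<sigma> (snd a) (snd b))
      = (\<pi> \<noteq> \<pi>')"
    using tripartite_branch_cross assms(1) by simp
qed (use assms tripartite_branch_indep in simp_all)

lemma homog_adj_blowup:
  assumes "\<forall>p<L. \<forall>q<L. (p, q) \<in> P \<longleftrightarrow> W p q" "\<And>p q. W p q \<longleftrightarrow> W q p"
    and "a \<in> {..<n} \<times> {..<L}" "b \<in> {..<n} \<times> {..<L}"
  shows "homog_adj P W a b \<longleftrightarrow> W (snd a) (snd b)"
  using assms unfolding homog_adj_def by (auto simp: mem_Times_iff)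

lemma clique_or_tripartite_model:
  assumes \<sigma>: "\<sigma> < 3" and s: "0 < s" and n: "t * t + 2 * t + 2 * s \<le> n"
  defines "D \<equiv> {..<n} \<times> {..<obst_size \<sigma>}"
  shows "(\<exists>C. indep_model (homog_adj P (obst_adj \<sigma>)) D t C (\<lambda>_ _. True)) \<or>
    (\<exists>C. indep_model (homog_adj P (obst_adj \<sigma>)) D (3 * s) C (\<lambda>c d. c div s \<noteq> d div s))"
proof -
  have tn: "t \<le> n" "2 * t \<le> n" "t * t \<le> n" "2 * s \<le> n"
    using n by linarith+
  from obst_adj_irrefl[of \<sigma>] show ?thesis
  proof (cases rule: homog_adj_cases[where W = "obst_adj \<sigma>" and L = "obst_size \<sigma>" and P = P])
    case (loop p)
    have "indep_model (homog_adj P (obst_adj \<sigma>)) D t (\<lambda>c. {(c, p)}) (\<lambda>_ _. True)"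
      unfolding D_def using loop tn(1) by (rule clique_model_loop)
    then show ?thesis by blast
  next
    case (asymmetric p q)
    have "indep_model (homog_adj P (obst_adj \<sigma>)) D t
        (\<lambda>c. {(2 * c, q), (2 * c + 1, p)}) (\<lambda>_ _. True)"
      unfolding D_def using asymmetric tn(2) by (rule clique_model_asymmetric)
    then show ?thesis by blast
  next
    case (symmetric p q)
    have "indep_model (homog_adj P (obst_adj \<sigma>)) D t (\<lambda>c. {(c, p), (c, q)}) (\<lambda>_ _. True)"
      unfolding D_def using symmetric tn(1) obst_adj_commute by (intro clique_model_symmetric) simp_all
    then show ?thesis by blast
  next
    case (matching p q)
    have "indep_model (homog_adj P (obst_adj \<sigma>)) D t (matching_branch t p q) (\<lambda>_ _. True)"
      unfolding D_def using matching tn(3) obst_adj_commute by (intro clique_model_matching) simp_all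
    then show ?thesis by blast
  next
    case blowup
    have "indep_model (homog_adj P (obst_adj \<sigma>)) D (3 * s)
        (\<lambda>c. id ` tripartite_branch \<sigma> s (c div s) (c mod s)) (\<lambda>c d. c div s \<noteq> d div s)"
      using homog_adj_blowup[OF blowup obst_adj_commute]
      by (intro indep_model_image[OF tripartite_model_blowup[OF \<sigma> s tn(4)]]) (auto simp: D_def)
    then show ?thesis
      by auto
  qed
qed

section \<open>The dichotomy\<close>

lemma verts_complete_graph: "verts (complete_graph t) = {0..<t}"
  by (simp add: complete_graph_def)

lemma verts_complete_tripartite: "verts (complete_tripartite s) = {0..<3 * s}"
  by (simp add: complete_tripartite_def)

lemma adj_complete_graph: "adj (complete_graph t) c d \<longleftrightarrow> c < t \<and> d < t \<and> c \<noteq> d"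
  unfolding complete_graph_def by (auto simp: doubleton_eq_iff)

lemma adj_complete_tripartite:
  "adj (complete_tripartite s) c d \<longleftrightarrow> c < 3 * s \<and> d < 3 * s \<and> c div s \<noteq> d div s"
  unfolding complete_tripartite_def by (auto simp: doubleton_eq_iff)

lemma distance_bound_or_large_model:
  assumes s: "0 < s"
  shows "\<exists>\<mu>. \<forall>G. is_graph G \<longrightarrow> dist_ext_biclique_le G \<mu> \<or>
      (\<exists>C. indep_model (adj G) (verts G) t C (\<lambda>_ _. True)) \<or>
      (\<exists>C. indep_model (adj G) (verts G) (3 * s) C (\<lambda>c d. c div s \<noteq> d div s))"
proof -
  define n where "n = t * t + 2 * t + 2 * s + 3"
  have "3 \<le> n"
    unfolding n_def by simp
  then obtain N :: nat where N: "\<forall>G \<tau> g. (\<forall>i<N. induced_obstruction G (\<tau> i) (g i)) \<longrightarrow>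
      (\<forall>i<N. \<forall>j<i. obst_verts (\<tau> i) (g i) \<inter> obst_verts (\<tau> j) (g j) = {}) \<longrightarrow>
      (\<exists>\<sigma> P v. \<sigma> < 3 \<and> induced_embedding (homog_adj P (obst_adj \<sigma>)) ({..<n} \<times> {..<obst_size \<sigma>}) G v)"
    by (rule exE[OF homogeneous_obstruction_rows])
  have "dist_ext_biclique_le G (4 * N) \<or>
      (\<exists>C. indep_model (adj G) (verts G) t C (\<lambda>_ _. True)) \<or>
      (\<exists>C. indep_model (adj G) (verts G) (3 * s) C (\<lambda>c d. c div s \<noteq> d div s))"
    if G: "is_graph G" for G
  proof -
    have "t * t + 2 * t + 2 * s \<le> n"
      unfolding n_def by simp
    note models = clique_or_tripartite_model[OF _ s this]
    from extended_biclique_or_disjoint_obstructions[OF G, of N] show ?thesis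
    proof (elim disjE exE conjE)
      fix \<tau> g assume "\<forall>i<N. induced_obstruction G (\<tau> i) (g i)"
        "\<forall>i<N. \<forall>j<i. obst_verts (\<tau> i) (g i) \<inter> obst_verts (\<tau> j) (g j) = {}"
      then obtain \<sigma> P v where "\<sigma> < 3"
        and v: "induced_embedding (homog_adj P (obst_adj \<sigma>)) ({..<n} \<times> {..<obst_size \<sigma>}) G v"
        using N by blast
      then show ?thesis
        using models[of \<sigma> P] indep_model_induced_embedding[OF v] by blast
    qed simp
  qed
  then show ?thesis
    by (intro exI[of _ "4 * N"] allI impI)
qed

lemma clique_or_tripartite_or_bounded_distance:
  assumes "graph_class \<H>" "projection_closed \<H>" "0 < s"
  shows "contains \<H> (complete_graph t) \<or> contains \<H> (complete_tripartite s) \<or>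
    (\<exists>\<mu>. \<forall>H\<in>\<H>. dist_ext_biclique_le H \<mu>)"
proof -
  obtain \<mu> where \<mu>: "\<forall>G. is_graph G \<longrightarrow> dist_ext_biclique_le G \<mu> \<or>
      (\<exists>C. indep_model (adj G) (verts G) t C (\<lambda>_ _. True)) \<or>
      (\<exists>C. indep_model (adj G) (verts G) (3 * s) C (\<lambda>c d. c div s \<noteq> d div s))"
    using assms(3) by (rule exE[OF distance_bound_or_large_model])
  have "contains \<H> (complete_graph t) \<or> contains \<H> (complete_tripartite s)"
    if H: "H \<in> \<H>" "\<not> dist_ext_biclique_le H \<mu>" for H
  proof -
    have G: "is_graph H"
      using assms(1) H(1) unfolding graph_class_def by blast
    note contains = contains_if_indep_model[OF assms(2) H(1) G]
    from \<mu>[rule_format, OF G] H(2) show ?thesis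
    proof (elim disjE exE)
      fix C assume "indep_model (adj H) (verts H) t C (\<lambda>_ _. True)"
      then have "contains \<H> (complete_graph t)"
        by (rule contains) (simp_all add: verts_complete_graph adj_complete_graph)
      then show ?thesis ..
    next
      fix C assume "indep_model (adj H) (verts H) (3 * s) C (\<lambda>c d. c div s \<noteq> d div s)"
      then have "contains \<H> (complete_tripartite s)"
        by (rule contains) (auto simp: verts_complete_tripartite adj_complete_tripartite)
      then show ?thesis ..
    qed simp
  qed
  then show ?thesis
    by blast
qed

theorem theorem1p14:
  fixes \<H> :: "graph set"
  assumes "graph_class \<H>" and "projection_closed \<H>"
  shows "(\<forall>t\<ge>1. contains \<H> (complete_graph t))
       \<or> (\<forall>t\<ge>1. contains \<H> (complete_tripartite t))
       \<or> (\<exists>\<mu>::nat. \<forall>H\<in>\<H>. dist_ext_biclique_le H \<mu>)"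
proof (rule ccontr)
  assume "\<not> ?thesis"
  then obtain t s where "\<not> contains \<H> (complete_graph t)" "\<not> contains \<H> (complete_tripartite s)"
    "0 < s" "\<nexists>\<mu>. \<forall>H\<in>\<H>. dist_ext_biclique_le H \<mu>"
    by auto
  then show False
    using clique_or_tripartite_or_bounded_distance[OF assms] by blast
qed

end
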